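(* Let $n\ge 3$ be an integer, let $d_0,\dots,d_{n-1}>0$ be real numbers (indices taken modulo $n$), and let $\lambda\in(\tfrac14,1)$. Define $$\alpha_j=\frac{1}{n}\,\frac{d_{j-1}d_{j+2}}{(d_{j-1}+d_{j+1})(d_j+d_{j+2})},\qquad \beta_i=\frac{d_{i-1}(d_{i-2}+d_{i+2})+d_{i+2}(d_{i-1}+d_{i+3})}{\sum_{k=0}^{n-1}(d_k+d_{k+2})(d_{k-1}+d_{k+3})},$$ and the $n\times n$ matrix $Q_n=(Q_{i,j})_{i,j=0}^{n-1}$ by $$Q_{i,j}=\begin{cases}(1-\lambda)\beta_j+2\lambda\alpha_i\left(1+2\cos\frac{2(j-i)\pi}{n}\right), & j\neq i,\\[2pt] \lambda+(1-\lambda)\beta_i-2(n-3)\lambda\alpha_i, & j=i.\end{cases}$$ Then $1$ is an eigenvalue of $Q_n$, $\lambda$ is an eigenvalue of $Q_n$ of multiplicity two, and the remaining $n-3$ eigenvalues $\lambda_4,\dots,\lambda_n$ of $Q_n$ (counted with multiplicity) satisfy $|\lambda_k|<\lambda$; i.e. $\lambda_1=1>\lambda_2=\lambda_3=\lambda>|\lambda_k|$ for $k=4,\dots,n$.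
   Context: $Q_n$ is the block of the subdivision matrix of a (tuned hybrid non-uniform) subdivision scheme acting on the $n$ vertices of the polygonal face surrounding an extraordinary vertex of valence $n$, where $d_j$ are the knot intervals of the edges around that face and $\lambda$ is the tuning parameter. Note $\beta_i$ is the coefficient of $P_i$ in $C=\frac{\sum_{i}(d_iP_{i+1}+d_{i+2}P_i)(d_{i-1}+d_{i+3})}{\sum_j(d_j+d_{j+2})(d_{j-1}+d_{j+3})}$. *)

theory Defs
  imports "Jordan_Normal_Form.Char_Poly"
begin

definition dm :: "(nat \<Rightarrow> real) \<Rightarrow> nat \<Rightarrow> int \<Rightarrow> real" where
  "dm d n k = d (nat (k mod int n))"

definition alpha :: "(nat \<Rightarrow> real) \<Rightarrow> nat \<Rightarrow> nat \<Rightarrow> real" where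
  "alpha d n j = (let j = int j in
     (1 / real n) * (dm d n (j - 1) * dm d n (j + 2)) /
     ((dm d n (j - 1) + dm d n (j + 1)) * (dm d n j + dm d n (j + 2))))"

definition beta :: "(nat \<Rightarrow> real) \<Rightarrow> nat \<Rightarrow> nat \<Rightarrow> real" where
  "beta d n i = (let i = int i in
     (dm d n (i - 1) * (dm d n (i - 2) + dm d n (i + 2))
      + dm d n (i + 2) * (dm d n (i - 1) + dm d n (i + 3))) /
     (\<Sum>k<n. (dm d n (int k) + dm d n (int k + 2)) * (dm d n (int k - 1) + dm d n (int k + 3))))"

definition Qmat :: "(nat \<Rightarrow> real) \<Rightarrow> nat \<Rightarrow> real \<Rightarrow> real mat" where
  "Qmat d n lam = mat n n (\<lambda>(i, j).
     if j \<noteq> i then (1 - lam) * beta d n j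
        + 2 * lam * alpha d n i * (1 + 2 * cos (2 * (real j - real i) * pi / real n))
     else lam + (1 - lam) * beta d n i - 2 * (real n - 3) * lam * alpha d n i)"

end

theory Submission
  imports Defs "Jordan_Normal_Form.Schur_Decomposition"
begin

(* Write c k = cos (2 pi k / n) and s k = sin (2 pi k / n). By the addition formula for the
   cosine, Q = D + (1 - lam) 1 beta^T + E (1 1^T + 2 c c^T + 2 s s^T) with the diagonal matrices
   D = diag (lam (1 - 2 n alpha i)) and E = diag (2 lam alpha i). Since the beta i sum to 1 and
   1, c, s are orthogonal with |c|^2 = |s|^2 = n/2, the span of 1, c, s is invariant:
   Q 1 = 1, and Q c = lam c, Q s = lam s modulo multiples of 1. In a basis extending (1, c, s)
   the matrix is block upper triangular, which splits off the factors for 1, lam, lam. Every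
   other eigenvalue mu has a left eigenvector y orthogonal to 1, c, s, and for such y the
   quadratic form y^T Q conj y reduces to the sum of D i |y i|^2; so mu is a weighted mean of
   the D i, and 0 < n alpha i < 1 gives |D i| < lam. *)

section \<open>Sums over the n-th roots of unity\<close>

definition root_cos :: "nat \<Rightarrow> nat \<Rightarrow> real" where
  "root_cos n k = cos (2 * pi * real k / real n)"

definition root_sin :: "nat \<Rightarrow> nat \<Rightarrow> real" where
  "root_sin n k = sin (2 * pi * real k / real n)"

lemma sum_cis_root_of_unity_eq_0:
  fixes n m :: nat
  assumes "n > 0" "\<not> n dvd m"
  shows "(\<Sum>k<n. cis (2 * pi * real m * real k / real n)) = 0"
proof -
  define w where "w = cis (2 * pi * real m / real n)"
  have "w \<noteq> 1"
  proof
    assume "w = 1"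
    then obtain k :: int where "2 * pi * real m / real n = 2 * pi * of_int k"
      by (auto simp: w_def complex_eq_iff cos_one_2pi_int)
    with assms have "real m = real n * of_int k" by (simp add: field_simps)
    then have "int m = int n * k"
      by (metis of_int_eq_iff of_int_mult of_int_of_nat_eq)
    then have "int n dvd int m" by simp
    with assms show False by simp
  qed
  have "(\<Sum>k<n. cis (2 * pi * real m * real k / real n)) = (\<Sum>k<n. w ^ k)"
    by (intro sum.cong refl) (auto simp: w_def DeMoivre mult_ac)
  also have "\<dots> = (w ^ n - 1) / (w - 1)"
    using \<open>w \<noteq> 1\<close> by (subst geometric_sum) auto
  also have "w ^ n = cis (2 * pi * real m)" using assms by (auto simp: w_def DeMoivre)
  also have "\<dots> = 1" by (simp add: complex_eq_iff)
  finally show ?thesis by simp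
qed

lemma
  fixes n m :: nat
  assumes "n > 0" "\<not> n dvd m"
  shows sum_cos_root_of_unity_eq_0: "(\<Sum>k<n. cos (2 * pi * real m * real k / real n)) = 0"
    and sum_sin_root_of_unity_eq_0: "(\<Sum>k<n. sin (2 * pi * real m * real k / real n)) = 0"
  using arg_cong[OF sum_cis_root_of_unity_eq_0[OF assms], of Re]
    arg_cong[OF sum_cis_root_of_unity_eq_0[OF assms], of Im]
  by simp_all

lemma
  assumes "n \<ge> 3"
  shows sum_root_cos: "(\<Sum>k<n. root_cos n k) = 0"
    and sum_root_sin: "(\<Sum>k<n. root_sin n k) = 0"
    and sum_root_cos_sq: "(\<Sum>k<n. root_cos n k * root_cos n k) = real n / 2"
    and sum_root_sin_sq: "(\<Sum>k<n. root_sin n k * root_sin n k) = real n / 2"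
    and sum_root_cos_sin: "(\<Sum>k<n. root_cos n k * root_sin n k) = 0"
proof -
  have n: "n > 0" "\<not> n dvd 1" "\<not> n dvd 2" using assms by (auto dest: dvd_imp_le)
  note sums_1 = sum_cos_root_of_unity_eq_0[OF n(1,2)] sum_sin_root_of_unity_eq_0[OF n(1,2)]
  note sums_2 = sum_cos_root_of_unity_eq_0[OF n(1,3)] sum_sin_root_of_unity_eq_0[OF n(1,3)]
  show "(\<Sum>k<n. root_cos n k) = 0" "(\<Sum>k<n. root_sin n k) = 0"
    using sums_1 by (simp_all add: root_cos_def root_sin_def)
  have cos_sq: "root_cos n k * root_cos n k = 1/2 + cos (2 * pi * real 2 * real k / real n) / 2"
    for k
    unfolding root_cos_def using cos_double_cos[of "2 * pi * real k / real n"]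
    by (simp add: power2_eq_square mult_ac) (simp add: field_simps)
  have sin_sq: "root_sin n k * root_sin n k = 1/2 - cos (2 * pi * real 2 * real k / real n) / 2"
    for k
    unfolding root_sin_def using cos_double_sin[of "2 * pi * real k / real n"]
    by (simp add: power2_eq_square mult_ac) (simp add: field_simps)
  have cos_sin: "root_cos n k * root_sin n k = sin (2 * pi * real 2 * real k / real n) / 2" for k
    unfolding root_cos_def root_sin_def using sin_double[of "2 * pi * real k / real n"]
    by (simp add: mult_ac)
  show "(\<Sum>k<n. root_cos n k * root_cos n k) = real n / 2"
    unfolding cos_sq sum.distrib sum_divide_distrib[symmetric] sums_2 by simp
  show "(\<Sum>k<n. root_sin n k * root_sin n k) = real n / 2"
    unfolding sin_sq sum_subtractf sum_divide_distrib[symmetric] sums_2 by simp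
  show "(\<Sum>k<n. root_cos n k * root_sin n k) = 0"
    unfolding cos_sin sum_divide_distrib[symmetric] sums_2 by simp
qed

lemma trig_linear_system_trivial:
  fixes x y z :: complex and a :: real
  assumes "sin a \<noteq> 0" "cos a \<noteq> 1"
    and eq0: "x + y = 0"
    and eq1: "x + of_real (cos a) * y + of_real (sin a) * z = 0"
    and eq2: "x + of_real (cos (2 * a)) * y + of_real (sin (2 * a)) * z = 0"
  shows "x = 0" "y = 0" "z = 0"
proof -
  define c s where "c = complex_of_real (cos a)" and "s = complex_of_real (sin a)"
  have "c \<noteq> 1" "s \<noteq> 0" using assms(1,2) by (simp_all add: c_def s_def)
  have "complex_of_real (cos (2 * a)) = 2 * c * c - 1" "complex_of_real (sin (2 * a)) = 2 * s * c"
    by (simp_all add: cos_double_cos sin_double power2_eq_square c_def s_def)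
  then have eq2': "x + (2 * c * c - 1) * y + 2 * s * c * z = 0"
    using eq2 by simp
  have "2 * (c - 1) * y = (x + (2 * c * c - 1) * y + 2 * s * c * z)
      - 2 * c * (x + c * y + s * z) + (2 * c - 1) * (x + y)"
    by (simp add: algebra_simps)
  then have "2 * (c - 1) * y = 0" using eq0 eq1 eq2' by (simp add: c_def s_def)
  then show "y = 0" using \<open>c \<noteq> 1\<close> by simp
  then show "x = 0" using eq0 by simp
  then show "z = 0" using eq1 \<open>y = 0\<close> \<open>s \<noteq> 0\<close> by (simp add: s_def)
qed

section \<open>The weights alpha and beta\<close>

lemma sum_lessThan_shift_periodic:
  fixes g :: "int \<Rightarrow> 'a::ab_group_add"
  assumes periodic: "\<And>k. g (k + int n) = g k"
  shows "(\<Sum>k<n. g (int k + c)) = (\<Sum>k<n. g (int k))"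
proof -
  have shift_1: "(\<Sum>k<n. h (int k + 1)) = (\<Sum>k<n. h (int k))"
    if "h (int n) = h 0" for h :: "int \<Rightarrow> 'a"
  proof -
    have "(\<Sum>k<n. h (int k)) + h (int n) = h 0 + (\<Sum>k<n. h (int k + 1))"
      using sum.lessThan_Suc_shift[of "\<lambda>k. h (int k)" n] by (simp add: add_ac)
    with that show ?thesis by simp
  qed
  show ?thesis
  proof (induction c rule: int_induct[where k = 0])
    case (step1 i)
    have "(\<Sum>k<n. g (int k + (i + 1))) = (\<Sum>k<n. g (int k + i))"
      using shift_1[of "\<lambda>k. g (k + i)"] periodic[of i] by (simp add: add_ac)
    with step1 show ?case by simp
  next
    case (step2 i)
    have "(\<Sum>k<n. g (int k + i)) = (\<Sum>k<n. g (int k + (i - 1)))"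
      using shift_1[of "\<lambda>k. g (k + (i - 1))"] periodic[of "i - 1"] by (simp add: add_ac)
    with step2 show ?case by simp
  qed simp
qed

lemma dm_add_period: "dm d n (k + int n) = dm d n k"
  by (simp add: dm_def)

lemma dm_pos:
  assumes "n > 0" "\<And>i. i < n \<Longrightarrow> d i > 0"
  shows "dm d n k > 0"
  unfolding dm_def using assms
  by (metis Euclidean_Rings.pos_mod_bound Euclidean_Rings.pos_mod_sign nat_less_iff of_nat_0_less_iff)

lemma sum_beta_eq_1:
  assumes "n > 0" "\<And>i. i < n \<Longrightarrow> d i > 0"
  shows "(\<Sum>i<n. beta d n i) = 1"
proof -
  let ?D = "dm d n"
  define den where
    "den = (\<Sum>k<n. (?D (int k) + ?D (int k + 2)) * (?D (int k - 1) + ?D (int k + 3)))"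
  have "den > 0" unfolding den_def using assms dm_pos[OF assms]
    by (intro sum_pos) (auto intro!: mult_pos_pos add_pos_pos)
  define g1 where "g1 k = ?D k * ?D (k - 1)" for k
  define g2 where "g2 k = ?D k * ?D (k + 3)" for k
  have "g1 (k + int n) = g1 k" "g2 (k + int n) = g2 k" for k
    using dm_add_period[of d n k] dm_add_period[of d n "k - 1"] dm_add_period[of d n "k + 3"]
    by (simp_all add: g1_def g2_def algebra_simps)
  note shift = sum_lessThan_shift_periodic[of g1, OF this(1)]
    sum_lessThan_shift_periodic[of g2, OF this(2)]
  have "(\<Sum>i<n. beta d n i) = ((\<Sum>i<n. g1 (int i + (-1))) + 2 * (\<Sum>i<n. g2 (int i + (-1)))
      + (\<Sum>i<n. g1 (int i + 3))) / den"
    unfolding beta_def Let_def den_def g1_def g2_def sum_divide_distrib[symmetric]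
    by (simp add: sum.distrib sum_distrib_left algebra_simps)
  moreover have "den = (\<Sum>i<n. g1 (int i)) + (\<Sum>i<n. g2 (int i))
      + (\<Sum>i<n. g2 (int i + (-1))) + (\<Sum>i<n. g1 (int i + 3))"
    unfolding den_def g1_def g2_def by (simp add: sum.distrib sum_distrib_left algebra_simps)
  ultimately show ?thesis using \<open>den > 0\<close> unfolding shift by simp
qed

lemma
  assumes "n > 0" "\<And>i. i < n \<Longrightarrow> d i > 0"
  shows n_alpha_pos: "0 < real n * alpha d n i"
    and n_alpha_less_1: "real n * alpha d n i < 1"
proof -
  define x y z w where "x = dm d n (int i - 1)" and "y = dm d n (int i + 2)"
    and "z = dm d n (int i + 1)" and "w = dm d n (int i)"
  have pos: "x > 0" "y > 0" "z > 0" "w > 0"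
    unfolding x_def y_def z_def w_def using dm_pos[OF assms] by auto
  have n_alpha: "real n * alpha d n i = x * y / ((x + z) * (w + y))"
    unfolding alpha_def Let_def x_def y_def z_def w_def using assms(1) by simp
  show "0 < real n * alpha d n i" unfolding n_alpha using pos by simp
  have "x * y < (x + z) * (w + y)" using pos by (simp add: algebra_simps add_pos_pos)
  then show "real n * alpha d n i < 1" unfolding n_alpha using pos by simp
qed

section \<open>The matrix as a rank-three perturbation of a diagonal matrix\<close>

lemma Qmat_carrier: "map_mat complex_of_real (Qmat d n lam) \<in> carrier_mat n n"
  by (simp add: Qmat_def)

definition qdiag :: "(nat \<Rightarrow> real) \<Rightarrow> nat \<Rightarrow> real \<Rightarrow> nat \<Rightarrow> real" where
  "qdiag d n lam i = lam * (1 - 2 * real n * alpha d n i)"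

lemma abs_qdiag_less:
  assumes "n > 0" "\<And>i. i < n \<Longrightarrow> d i > 0" "lam > 0"
  shows "\<bar>qdiag d n lam i\<bar> < lam"
proof -
  have "0 < lam * (real n * alpha d n i)" "lam * (real n * alpha d n i) < lam"
    using n_alpha_pos[of n d i, OF assms(1,2)] n_alpha_less_1[of n d i, OF assms(1,2)] assms(3)
    by (simp_all add: mult_strict_left_mono)
  moreover have "qdiag d n lam i = lam - 2 * (lam * (real n * alpha d n i))"
    by (simp add: qdiag_def algebra_simps)
  ultimately show ?thesis by (simp add: abs_less_iff)
qed

lemma Qmat_entry:
  assumes "i < n" "j < n"
  shows "Qmat d n lam $$ (i, j) = (if i = j then qdiag d n lam i else 0) + (1 - lam) * beta d n j
    + 2 * lam * alpha d n i * (1 + 2 * root_cos n i * root_cos n j + 2 * root_sin n i * root_sin n j)"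
proof -
  have "cos (2 * (real j - real i) * pi / real n)
      = cos (2 * pi * real j / real n - 2 * pi * real i / real n)"
    by (simp add: diff_divide_distrib algebra_simps)
  then have "cos (2 * (real j - real i) * pi / real n)
      = root_cos n i * root_cos n j + root_sin n i * root_sin n j"
    by (simp add: cos_diff root_cos_def root_sin_def)
  moreover have "1 + 2 * root_cos n k * root_cos n k + 2 * root_sin n k * root_sin n k = 3" for k
    unfolding root_cos_def root_sin_def
    by (simp add: mult.assoc flip: distrib_left power2_eq_square)
  ultimately show ?thesis
    using assms by (cases "i = j") (simp_all add: Qmat_def qdiag_def, simp_all add: algebra_simps)
qed

lemma Qmat_row_mult_sum:
  fixes x :: "nat \<Rightarrow> complex"
  assumes "i < n"
  shows "(\<Sum>k<n. of_real (Qmat d n lam $$ (i, k)) * x k) =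
    of_real (qdiag d n lam i) * x i + of_real (1 - lam) * (\<Sum>k<n. of_real (beta d n k) * x k)
    + of_real (2 * lam * alpha d n i) * ((\<Sum>k<n. x k)
        + 2 * of_real (root_cos n i) * (\<Sum>k<n. of_real (root_cos n k) * x k)
        + 2 * of_real (root_sin n i) * (\<Sum>k<n. of_real (root_sin n k) * x k))"
proof -
  have "(\<Sum>k<n. of_real (Qmat d n lam $$ (i, k)) * x k) = (\<Sum>k<n.
      (if k = i then of_real (qdiag d n lam i) * x i else 0)
      + of_real (1 - lam) * (of_real (beta d n k) * x k)
      + of_real (2 * lam * alpha d n i) * (x k
        + 2 * of_real (root_cos n i) * (of_real (root_cos n k) * x k)
        + 2 * of_real (root_sin n i) * (of_real (root_sin n k) * x k)))"
    by (intro sum.cong refl) (auto simp: Qmat_entry[OF assms] algebra_simps)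
  then show ?thesis
    using assms by (simp only: sum.distrib sum_distrib_left[symmetric] sum.delta finite_lessThan
        lessThan_iff if_True)
qed

section \<open>A basis extending the invariant subspace\<close>

definition trig_basis_mat :: "nat \<Rightarrow> complex mat" where
  "trig_basis_mat n = mat n n (\<lambda>(i, j).
     if j = 0 then 1 else if j = 1 then of_real (root_cos n i)
     else if j = 2 then of_real (root_sin n i) else if i = j then 1 else 0)"

lemma trig_basis_mat_carrier [simp]: "trig_basis_mat n \<in> carrier_mat n n"
  and dim_row_trig_basis_mat [simp]: "dim_row (trig_basis_mat n) = n"
  and dim_col_trig_basis_mat [simp]: "dim_col (trig_basis_mat n) = n"
  by (simp_all add: trig_basis_mat_def)

lemma
  assumes "n \<ge> 3"
  shows col_trig_basis_mat_0: "col (trig_basis_mat n) 0 = vec n (\<lambda>_. 1)"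
    and col_trig_basis_mat_1: "col (trig_basis_mat n) 1 = vec n (\<lambda>i. of_real (root_cos n i))"
    and col_trig_basis_mat_2: "col (trig_basis_mat n) 2 = vec n (\<lambda>i. of_real (root_sin n i))"
  using assms by (auto simp: trig_basis_mat_def)

lemma trig_basis_mat_mult_vec:
  assumes "n \<ge> 3" "i < n" "v \<in> carrier_vec n"
  shows "(trig_basis_mat n *\<^sub>v v) $ i = v $ 0 + of_real (root_cos n i) * v $ 1
    + of_real (root_sin n i) * v $ 2 + (if 3 \<le> i then v $ i else 0)"
proof -
  have "(trig_basis_mat n *\<^sub>v v) $ i = (\<Sum>j<n. trig_basis_mat n $$ (i, j) * v $ j)"
    using assms by (auto simp: scalar_prod_def lessThan_atLeast0 intro!: sum.cong)
  also have "\<dots> = (\<Sum>j<n. (if j = 0 then v $ 0 else 0)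
      + (if j = 1 then of_real (root_cos n i) * v $ 1 else 0)
      + (if j = 2 then of_real (root_sin n i) * v $ 2 else 0)
      + (if j = i then if 3 \<le> i then v $ i else 0 else 0))"
    by (rule sum.cong) (use assms in \<open>auto simp: trig_basis_mat_def\<close>)
  also have "\<dots> = v $ 0 + of_real (root_cos n i) * v $ 1
      + of_real (root_sin n i) * v $ 2 + (if 3 \<le> i then v $ i else 0)"
    using assms by (simp add: sum.distrib)
  finally show ?thesis .
qed

lemma det_trig_basis_mat_neq_0:
  assumes "n \<ge> 3"
  shows "det (trig_basis_mat n) \<noteq> 0"
proof
  assume "det (trig_basis_mat n) = 0"
  then obtain v where v: "v \<in> carrier_vec n" "v \<noteq> 0\<^sub>v n" "trig_basis_mat n *\<^sub>v v = 0\<^sub>v n"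
    using det_0_iff_vec_prod_zero[OF trig_basis_mat_carrier] by auto
  have rows: "v $ 0 + of_real (root_cos n i) * v $ 1 + of_real (root_sin n i) * v $ 2
      + (if 3 \<le> i then v $ i else 0) = 0" if "i < n" for i
    using trig_basis_mat_mult_vec[OF assms that v(1)] v(3) that by simp
  define a where "a = 2 * pi / real n"
  have "0 < a" "a < pi" unfolding a_def using assms by (auto simp: field_simps)
  then have "sin a \<noteq> 0" "cos a \<noteq> 1"
    using sin_gt_zero[of a] cos_monotone_0_pi[of 0 a] by auto
  moreover have "v $ 0 + v $ 1 = 0"
    using rows[of 0] assms by (simp add: root_cos_def root_sin_def)
  moreover have "v $ 0 + of_real (cos a) * v $ 1 + of_real (sin a) * v $ 2 = 0"
    using rows[of 1] assms by (simp add: root_cos_def root_sin_def a_def)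
  moreover have "v $ 0 + of_real (cos (2 * a)) * v $ 1 + of_real (sin (2 * a)) * v $ 2 = 0"
    using rows[of 2] assms by (simp add: root_cos_def root_sin_def a_def)
  ultimately have zero: "v $ 0 = 0" "v $ 1 = 0" "v $ 2 = 0"
    by (rule trig_linear_system_trivial)+
  have "v $ i = 0" if "i < n" for i
  proof (cases "3 \<le> i")
    case True
    then show ?thesis using rows[OF that] zero by simp
  next
    case False
    then have "i = 0 \<or> i = 1 \<or> i = 2" by auto
    then show ?thesis using zero by auto
  qed
  then have "v = 0\<^sub>v n" using v(1) by (intro eq_vecI) auto
  with v(2) show False ..
qed

lemma Qmat_mult_trig_basis_cols:
  fixes d n lam
  defines "Q \<equiv> map_mat complex_of_real (Qmat d n lam)" and "T \<equiv> trig_basis_mat n"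
  assumes "n \<ge> 3" "\<And>i. i < n \<Longrightarrow> d i > 0"
  shows "Q *\<^sub>v col T 0 = col T 0"
    and "Q *\<^sub>v col T 1 = of_real lam \<cdot>\<^sub>v col T 1
      + of_real ((1 - lam) * (\<Sum>k<n. beta d n k * root_cos n k)) \<cdot>\<^sub>v col T 0"
    and "Q *\<^sub>v col T 2 = of_real lam \<cdot>\<^sub>v col T 2
      + of_real ((1 - lam) * (\<Sum>k<n. beta d n k * root_sin n k)) \<cdot>\<^sub>v col T 0"
proof -
  have Q_mult: "Q *\<^sub>v vec n x = vec n (\<lambda>i. \<Sum>k<n. of_real (Qmat d n lam $$ (i, k)) * x k)"
    for x
    by (rule eq_vecI) (auto simp: Q_def Qmat_def scalar_prod_def atLeast0LessThan intro!: sum.cong)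
  have "(\<Sum>k<n. beta d n k) = 1" using assms(3) by (intro sum_beta_eq_1 assms(4)) simp
  then have sum_beta: "(\<Sum>k<n. complex_of_real (beta d n k)) = 1"
    by (metis of_real_1 of_real_sum)
  note trig_sums = sum_root_cos[OF assms(3)] sum_root_sin[OF assms(3)]
    sum_root_cos_sq[OF assms(3)] sum_root_sin_sq[OF assms(3)] sum_root_cos_sin[OF assms(3)]
  have sums: "(\<Sum>k<n. complex_of_real (root_cos n k)) = 0"
    "(\<Sum>k<n. complex_of_real (root_sin n k)) = 0"
    "(\<Sum>k<n. of_real (root_cos n k) * complex_of_real (root_cos n k)) = of_nat n / 2"
    "(\<Sum>k<n. of_real (root_sin n k) * complex_of_real (root_sin n k)) = of_nat n / 2"
    "(\<Sum>k<n. of_real (root_cos n k) * complex_of_real (root_sin n k)) = 0"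
    "(\<Sum>k<n. of_real (root_sin n k) * complex_of_real (root_cos n k)) = 0"
    using trig_sums[THEN arg_cong[where f = complex_of_real]]
    by (simp_all add: mult.commute flip: of_real_sum of_real_mult)
  show "Q *\<^sub>v col T 0 = col T 0"
    unfolding T_def col_trig_basis_mat_0[OF assms(3)] Q_mult
    by (rule eq_vecI) (simp_all add: Qmat_row_mult_sum[where x = "\<lambda>_. 1", simplified] sums sum_beta
        qdiag_def algebra_simps)
  show "Q *\<^sub>v col T 1 = of_real lam \<cdot>\<^sub>v col T 1
      + of_real ((1 - lam) * (\<Sum>k<n. beta d n k * root_cos n k)) \<cdot>\<^sub>v col T 0"
    unfolding T_def col_trig_basis_mat_0[OF assms(3)] col_trig_basis_mat_1[OF assms(3)] Q_mult
    by (rule eq_vecI) (simp_all add: Qmat_row_mult_sum sums, simp_all add: qdiag_def algebra_simps)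
  show "Q *\<^sub>v col T 2 = of_real lam \<cdot>\<^sub>v col T 2
      + of_real ((1 - lam) * (\<Sum>k<n. beta d n k * root_sin n k)) \<cdot>\<^sub>v col T 0"
    unfolding T_def col_trig_basis_mat_0[OF assms(3)] col_trig_basis_mat_2[OF assms(3)] Q_mult
    by (rule eq_vecI) (simp_all add: Qmat_row_mult_sum sums, simp_all add: qdiag_def algebra_simps)
qed

section \<open>Block triangular form and left eigenvectors\<close>

lemma col_conj_mat_eq:
  fixes M T Ti :: "'a::field mat"
  assumes "M \<in> carrier_mat n n" "T \<in> carrier_mat n n" "Ti \<in> carrier_mat n n" "Ti * T = 1\<^sub>m n"
    and "j < n" "j' < n"
    and "M *\<^sub>v col T j = a \<cdot>\<^sub>v col T j + b \<cdot>\<^sub>v col T j'"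
  shows "col (Ti * M * T) j = a \<cdot>\<^sub>v unit_vec n j + b \<cdot>\<^sub>v unit_vec n j'"
proof -
  have Ti_col: "Ti *\<^sub>v col T k = unit_vec n k" if "k < n" for k
    using assms(2-4) that by (metis col_mult2 col_one)
  have "col (Ti * M * T) j = (Ti * M) *\<^sub>v col T j"
    using assms(1-3,5) by (intro col_mult2) auto
  also have "\<dots> = Ti *\<^sub>v (M *\<^sub>v col T j)"
    using assms(1-3,5) by (intro assoc_mult_mat_vec) auto
  also have "\<dots> = a \<cdot>\<^sub>v (Ti *\<^sub>v col T j) + b \<cdot>\<^sub>v (Ti *\<^sub>v col T j')"
  proof -
    have "col T i \<in> carrier_vec n" for i using assms(2) unfolding carrier_vec_def by auto
    then show ?thesis
      using assms(7) by (simp add: mult_add_distrib_mat_vec[OF assms(3)] mult_mat_vec[OF assms(3)])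
  qed
  finally show ?thesis using Ti_col assms(5,6) by simp
qed

lemma transpose_block_upper_mult_zero_append:
  assumes "B1 \<in> carrier_mat k k" "B2 \<in> carrier_mat k m" "B4 \<in> carrier_mat m m"
    and "w \<in> carrier_vec m"
  shows "transpose_mat (four_block_mat B1 B2 (0\<^sub>m m k) B4) *\<^sub>v (0\<^sub>v k @\<^sub>v w)
    = 0\<^sub>v k @\<^sub>v (transpose_mat B4 *\<^sub>v w)"
proof -
  have "transpose_mat (four_block_mat B1 B2 (0\<^sub>m m k) B4) *\<^sub>v (0\<^sub>v k @\<^sub>v w)
      = four_block_mat (transpose_mat B1) (transpose_mat (0\<^sub>m m k)) (transpose_mat B2)
          (transpose_mat B4) *\<^sub>v (0\<^sub>v k @\<^sub>v w)"
    using assms by (subst transpose_four_block_mat) auto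
  also have "\<dots> = (transpose_mat B1 *\<^sub>v 0\<^sub>v k + transpose_mat (0\<^sub>m m k) *\<^sub>v w)
        @\<^sub>v (transpose_mat B2 *\<^sub>v 0\<^sub>v k + transpose_mat B4 *\<^sub>v w)"
    using assms by (intro four_block_mat_mult_vec) auto
  also have "\<dots> = 0\<^sub>v k @\<^sub>v (transpose_mat B4 *\<^sub>v w)"
  proof -
    have "0\<^sub>m k m *\<^sub>v w = 0\<^sub>v k"
      using assms(4) by (intro eq_vecI) (auto simp: scalar_prod_def)
    moreover have "transpose_mat B1 *\<^sub>v 0\<^sub>v k = 0\<^sub>v k" "transpose_mat B2 *\<^sub>v 0\<^sub>v k = 0\<^sub>v m"
      using assms(1,2) by auto
    ultimately show ?thesis using assms(3,4) by simp
  qed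
  finally show ?thesis .
qed

lemma block_upper_triangular_char_poly:
  fixes B :: "complex mat"
  assumes B: "B \<in> carrier_mat n n" and "k \<le> n"
    and lower_left: "\<And>i j. k \<le> i \<Longrightarrow> i < n \<Longrightarrow> j < k \<Longrightarrow> B $$ (i, j) = 0"
  obtains mus where "length mus = n - k"
    and "char_poly B = char_poly (mat k k (\<lambda>ij. B $$ ij)) * (\<Prod>\<mu>\<leftarrow>mus. [:-\<mu>, 1:])"
    and "\<And>\<mu>. \<mu> \<in> set mus \<Longrightarrow> \<exists>v \<in> carrier_vec n. v \<noteq> 0\<^sub>v n
           \<and> transpose_mat B *\<^sub>v v = \<mu> \<cdot>\<^sub>v v \<and> (\<forall>j<k. v $ j = 0)"
proof -
  obtain B1 B2 B3 B4 where split: "split_block B k k = (B1, B2, B3, B4)"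
    by (cases "split_block B k k") auto
  have dims: "dim_row B = k + (n - k)" "dim_col B = k + (n - k)" using B \<open>k \<le> n\<close> by auto
  note blocks = split_block[OF split dims]
  have "B1 = mat k k (\<lambda>ij. B $$ ij)"
    using split B by (auto simp: split_block_def Let_def)
  moreover have "B3 = 0\<^sub>m (n - k) k"
    using split B lower_left by (intro eq_matI) (auto simp: split_block_def Let_def)
  ultimately have B_eq: "B = four_block_mat (mat k k (\<lambda>ij. B $$ ij)) B2 (0\<^sub>m (n - k) k) B4"
    and B1: "mat k k (\<lambda>ij. B $$ ij) \<in> carrier_mat k k"
    using blocks by auto
  obtain mus where mus: "char_poly B4 = (\<Prod>\<mu>\<leftarrow>mus. [:-\<mu>, 1:])" "length mus = n - k"
    using char_poly_factorized[OF blocks(4)] by blast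
  have "char_poly B = char_poly (mat k k (\<lambda>ij. B $$ ij)) * char_poly B4"
    by (rule char_poly_0_block[OF B_eq _ _ B1 blocks(2,4)])
      (use char_poly_factorized[OF B1] char_poly_factorized[OF blocks(4)] in blast)+
  moreover have "\<exists>v \<in> carrier_vec n. v \<noteq> 0\<^sub>v n
      \<and> transpose_mat B *\<^sub>v v = \<mu> \<cdot>\<^sub>v v \<and> (\<forall>j<k. v $ j = 0)" if "\<mu> \<in> set mus" for \<mu>
  proof -
    have "eigenvalue (transpose_mat B4) \<mu>"
      using blocks(4) linear_poly_root[OF that] mus(1)
      by (simp add: eigenvalue_root_char_poly[of _ "n - k"])
    then obtain w where w: "w \<in> carrier_vec (n - k)" "w \<noteq> 0\<^sub>v (n - k)"
      "transpose_mat B4 *\<^sub>v w = \<mu> \<cdot>\<^sub>v w"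
      using blocks(4) unfolding eigenvalue_def eigenvector_def by auto
    have "transpose_mat B *\<^sub>v (0\<^sub>v k @\<^sub>v w) = 0\<^sub>v k @\<^sub>v (\<mu> \<cdot>\<^sub>v w)"
      using transpose_block_upper_mult_zero_append[OF B1 blocks(2,4) w(1)] w(3) B_eq by simp
    also have "\<dots> = \<mu> \<cdot>\<^sub>v (0\<^sub>v k @\<^sub>v w)"
      using w(1) by (intro eq_vecI) auto
    finally have "transpose_mat B *\<^sub>v (0\<^sub>v k @\<^sub>v w) = \<mu> \<cdot>\<^sub>v (0\<^sub>v k @\<^sub>v w)" .
    moreover have "0\<^sub>v k @\<^sub>v w \<in> carrier_vec n"
      using w(1) \<open>k \<le> n\<close> unfolding carrier_vec_def by auto
    moreover have "0\<^sub>v k @\<^sub>v w \<noteq> 0\<^sub>v n"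
    proof
      assume zero: "0\<^sub>v k @\<^sub>v w = 0\<^sub>v n"
      have "w $ i = (0\<^sub>v k @\<^sub>v w) $ (k + i)" if "i < n - k" for i
        using that w(1) by simp
      then have "w $ i = 0" if "i < n - k" for i
        using that zero \<open>k \<le> n\<close> by simp
      then have "w = 0\<^sub>v (n - k)" using w(1) by (intro eq_vecI) auto
      with w(2) show False ..
    qed
    ultimately show ?thesis by (intro bexI[of _ "0\<^sub>v k @\<^sub>v w"]) auto
  qed
  ultimately show ?thesis using that mus(2) unfolding mus(1) by blast
qed

lemma left_eigenvector_conj_mat:
  fixes M T Ti :: "'a::field mat"
  assumes "M \<in> carrier_mat n n" "T \<in> carrier_mat n n" "Ti \<in> carrier_mat n n"
    and "Ti * T = 1\<^sub>m n" "T * Ti = 1\<^sub>m n" "v \<in> carrier_vec n"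
    and "transpose_mat (Ti * M * T) *\<^sub>v v = \<mu> \<cdot>\<^sub>v v"
  shows "transpose_mat M *\<^sub>v (transpose_mat Ti *\<^sub>v v) = \<mu> \<cdot>\<^sub>v (transpose_mat Ti *\<^sub>v v)"
    and "transpose_mat T *\<^sub>v (transpose_mat Ti *\<^sub>v v) = v"
proof -
  let ?Mt = "transpose_mat M" and ?Tt = "transpose_mat T" and ?Tit = "transpose_mat Ti"
  have carrier: "?Mt \<in> carrier_mat n n" "?Tt \<in> carrier_mat n n" "?Tit \<in> carrier_mat n n"
    "?Tit *\<^sub>v v \<in> carrier_vec n"
    using assms(1-3,6) by auto
  have "?Tit * ?Tt = transpose_mat (T * Ti)" using transpose_mult[OF assms(2,3)] by simp
  then have Tit_Tt: "?Tit * ?Tt = 1\<^sub>m n" using assms(5) by simp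
  have "?Tt * ?Tit = transpose_mat (Ti * T)" using transpose_mult[OF assms(3,2)] by simp
  then have Tt_Tit: "?Tt * ?Tit = 1\<^sub>m n" using assms(4) by simp
  have "transpose_mat (Ti * M * T) = ?Tt * transpose_mat (Ti * M)"
    using assms(1-3) by (intro transpose_mult) auto
  also have "transpose_mat (Ti * M) = ?Mt * ?Tit"
    using assms(1,3) by (intro transpose_mult) auto
  finally have conj: "transpose_mat (Ti * M * T) = ?Tt * (?Mt * ?Tit)" .
  have "?Mt *\<^sub>v (?Tit *\<^sub>v v) = (?Tit * ?Tt) *\<^sub>v (?Mt *\<^sub>v (?Tit *\<^sub>v v))"
    using carrier by (simp add: Tit_Tt)
  also have "\<dots> = ?Tit *\<^sub>v ((?Tt * (?Mt * ?Tit)) *\<^sub>v v)"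
    using carrier assms(6) by (simp add: assoc_mult_mat_vec[of _ n n _ n])
  also have "\<dots> = \<mu> \<cdot>\<^sub>v (?Tit *\<^sub>v v)"
    using assms(3,6,7) by (simp flip: conj add: mult_mat_vec[of _ n n])
  finally show "?Mt *\<^sub>v (?Tit *\<^sub>v v) = \<mu> \<cdot>\<^sub>v (?Tit *\<^sub>v v)" .
  have "?Tt *\<^sub>v (?Tit *\<^sub>v v) = (?Tt * ?Tit) *\<^sub>v v"
    using carrier assms(6) by (simp add: assoc_mult_mat_vec[of _ n n _ n])
  then show "?Tt *\<^sub>v (?Tit *\<^sub>v v) = v"
    using assms(6) by (simp add: Tt_Tit)
qed

lemma char_poly_conj_block_upper_triangular:
  fixes M T Ti :: "complex mat"
  assumes M: "M \<in> carrier_mat n n" and T: "T \<in> carrier_mat n n" "Ti \<in> carrier_mat n n"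
    "Ti * T = 1\<^sub>m n" "T * Ti = 1\<^sub>m n"
    and "k \<le> n" "\<And>i j. k \<le> i \<Longrightarrow> i < n \<Longrightarrow> j < k \<Longrightarrow> (Ti * M * T) $$ (i, j) = 0"
  obtains mus where "length mus = n - k"
    and "char_poly M = char_poly (mat k k (\<lambda>ij. (Ti * M * T) $$ ij)) * (\<Prod>\<mu>\<leftarrow>mus. [:-\<mu>, 1:])"
    and "\<And>\<mu>. \<mu> \<in> set mus \<Longrightarrow> \<exists>y \<in> carrier_vec n. y \<noteq> 0\<^sub>v n
           \<and> transpose_mat M *\<^sub>v y = \<mu> \<cdot>\<^sub>v y \<and> (\<forall>j<k. col T j \<bullet> y = 0)"
proof -
  have B: "Ti * M * T \<in> carrier_mat n n" using M T by simp
  have "T * (Ti * M * T) * Ti = (T * Ti) * M * (T * Ti)"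
    using M T(1,2) by (simp add: assoc_mult_mat[of _ n n _ n _ n])
  also have "\<dots> = M" using M T(4) by simp
  finally have "similar_mat_wit M (Ti * M * T) T Ti"
    by (intro similar_mat_witI[OF T(4,3) _ M B T(1,2)]) (rule sym)
  then have "similar_mat M (Ti * M * T)" unfolding similar_mat_def by blast
  then have char_poly_M: "char_poly M = char_poly (Ti * M * T)" by (rule char_poly_similar)
  obtain mus where mus: "length mus = n - k"
    "char_poly (Ti * M * T) = char_poly (mat k k (\<lambda>ij. (Ti * M * T) $$ ij)) * (\<Prod>\<mu>\<leftarrow>mus. [:-\<mu>, 1:])"
    and eigen: "\<And>\<mu>. \<mu> \<in> set mus \<Longrightarrow> \<exists>v \<in> carrier_vec n. v \<noteq> 0\<^sub>v n
      \<and> transpose_mat (Ti * M * T) *\<^sub>v v = \<mu> \<cdot>\<^sub>v v \<and> (\<forall>j<k. v $ j = 0)"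
    using block_upper_triangular_char_poly[OF B assms(6,7)] by blast
  have left_eigen: "\<exists>y \<in> carrier_vec n. y \<noteq> 0\<^sub>v n \<and> transpose_mat M *\<^sub>v y = \<mu> \<cdot>\<^sub>v y
      \<and> (\<forall>j<k. col T j \<bullet> y = 0)" if \<mu>: "\<mu> \<in> set mus" for \<mu>
  proof -
    obtain v where v: "v \<in> carrier_vec n" "v \<noteq> 0\<^sub>v n"
      "transpose_mat (Ti * M * T) *\<^sub>v v = \<mu> \<cdot>\<^sub>v v" "\<forall>j<k. v $ j = 0"
      using eigen[OF \<mu>] by blast
    define y where "y = transpose_mat Ti *\<^sub>v v"
    note y_props = left_eigenvector_conj_mat[OF M T v(1,3), folded y_def]
    have "y \<in> carrier_vec n" using T v(1) by (simp add: y_def)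
    moreover have "y \<noteq> 0\<^sub>v n"
    proof
      assume "y = 0\<^sub>v n"
      then have "v = transpose_mat T *\<^sub>v 0\<^sub>v n" using y_props(2) by simp
      also have "\<dots> = 0\<^sub>v n" using T(1) by (intro eq_vecI) (auto simp: scalar_prod_def)
      finally show False using v(2) by simp
    qed
    moreover have "col T j \<bullet> y = 0" if "j < k" for j
      using y_props(2)[THEN arg_cong[where f = "\<lambda>v. v $ j"]] v(4) that \<open>k \<le> n\<close> T(1) by simp
    ultimately show ?thesis using y_props(1) by blast
  qed
  show ?thesis
  proof (rule that[OF mus(1) _ left_eigen])
    show "char_poly M = char_poly (mat k k (\<lambda>ij. (Ti * M * T) $$ ij)) * (\<Prod>\<mu>\<leftarrow>mus. [:-\<mu>, 1:])"
      using char_poly_M mus(2) by simp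
  qed
qed

section \<open>The eigenvalues off the invariant subspace\<close>

lemma left_eigenvector_quadratic_form:
  fixes M :: "complex mat"
  assumes "M \<in> carrier_mat n n" "y \<in> carrier_vec n" "transpose_mat M *\<^sub>v y = \<mu> \<cdot>\<^sub>v y"
  shows "\<mu> * (\<Sum>j<n. y $ j * cnj (y $ j)) = (\<Sum>i<n. y $ i * (\<Sum>j<n. M $$ (i, j) * cnj (y $ j)))"
proof -
  have "\<mu> * y $ j = (\<Sum>i<n. y $ i * M $$ (i, j))" if "j < n" for j
  proof -
    have "\<mu> * y $ j = (transpose_mat M *\<^sub>v y) $ j" using assms(1,2) that by (simp add: assms(3))
    also have "\<dots> = (\<Sum>i<n. y $ i * M $$ (i, j))"
      using assms(1,2) that by (auto simp: scalar_prod_def lessThan_atLeast0 mult.commute intro!: sum.cong)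
    finally show ?thesis .
  qed
  then have "\<mu> * (\<Sum>j<n. y $ j * cnj (y $ j)) = (\<Sum>j<n. \<Sum>i<n. y $ i * M $$ (i, j) * cnj (y $ j))"
    by (simp add: sum_distrib_left sum_distrib_right mult.assoc[symmetric])
  also have "\<dots> = (\<Sum>i<n. y $ i * (\<Sum>j<n. M $$ (i, j) * cnj (y $ j)))"
    by (subst sum.swap) (simp add: sum_distrib_left mult.assoc)
  finally show ?thesis .
qed

lemma cmod_less_of_weighted_mean:
  fixes a :: "nat \<Rightarrow> real" and y :: "nat \<Rightarrow> complex"
  assumes a: "\<And>i. i < n \<Longrightarrow> \<bar>a i\<bar> < lam" and "i0 < n" "y i0 \<noteq> 0"
    and mean: "\<mu> * (\<Sum>i<n. y i * cnj (y i)) = (\<Sum>i<n. of_real (a i) * (y i * cnj (y i)))"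
  shows "cmod \<mu> < lam"
proof -
  define N R where "N = (\<Sum>i<n. (cmod (y i))\<^sup>2)" and "R = (\<Sum>i<n. a i * (cmod (y i))\<^sup>2)"
  have "y i * cnj (y i) = of_real ((cmod (y i))\<^sup>2)" for i
    by (simp add: complex_norm_square del: of_real_power)
  then have "\<mu> * of_real N = of_real R" using mean by (simp add: N_def R_def)
  moreover have "N > 0" unfolding N_def using assms(2,3) by (intro sum_pos2[of _ i0]) auto
  ultimately have "cmod \<mu> = \<bar>R\<bar> / N"
    by (metis abs_divide abs_of_pos nonzero_mult_div_cancel_right norm_of_real of_real_divide
        of_real_eq_0_iff less_irrefl)
  have "\<bar>R\<bar> \<le> (\<Sum>i<n. \<bar>a i\<bar> * (cmod (y i))\<^sup>2)"
    unfolding R_def by (rule order_trans[OF sum_abs]) (simp add: abs_mult)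
  also have "\<dots> < (\<Sum>i<n. lam * (cmod (y i))\<^sup>2)"
    using a[THEN less_imp_le] a assms(2,3)
    by (intro sum_strict_mono_ex1) (auto intro!: mult_right_mono bexI[of _ i0])
  also have "\<dots> = lam * N" by (simp add: N_def sum_distrib_left)
  finally show ?thesis using \<open>cmod \<mu> = \<bar>R\<bar> / N\<close> \<open>N > 0\<close> by (simp add: divide_less_eq)
qed

lemma Qmat_left_eigenvalue_bound:
  fixes d n lam
  defines "Q \<equiv> map_mat complex_of_real (Qmat d n lam)"
  assumes n: "n \<ge> 3" and d: "\<And>i. i < n \<Longrightarrow> d i > 0" and "lam > 0"
    and y: "y \<in> carrier_vec n" "y \<noteq> 0\<^sub>v n" "transpose_mat Q *\<^sub>v y = \<mu> \<cdot>\<^sub>v y"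
    and orthogonal: "\<forall>j<3. col (trig_basis_mat n) j \<bullet> y = 0"
  shows "cmod \<mu> < lam"
proof -
  have orth: "(\<Sum>i<n. trig_basis_mat n $$ (i, j) * y $ i) = 0" if "j < 3" for j
    using orthogonal that n y(1) by (auto simp: scalar_prod_def lessThan_atLeast0)
  have "(\<Sum>i<n. y $ i) = 0" "(\<Sum>i<n. of_real (root_cos n i) * y $ i) = 0"
    "(\<Sum>i<n. of_real (root_sin n i) * y $ i) = 0"
    using orth[of 0] orth[of 1] orth[of 2] n by (simp_all add: trig_basis_mat_def)
  from this[THEN arg_cong[where f = cnj]]
  have conj_orth: "(\<Sum>i<n. cnj (y $ i)) = 0" "(\<Sum>i<n. of_real (root_cos n i) * cnj (y $ i)) = 0"
    "(\<Sum>i<n. of_real (root_sin n i) * cnj (y $ i)) = 0"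
    by simp_all
  define K where "K = (\<Sum>j<n. of_real (beta d n j) * cnj (y $ j))"
  have "(\<Sum>j<n. Q $$ (i, j) * cnj (y $ j))
      = of_real (qdiag d n lam i) * cnj (y $ i) + of_real (1 - lam) * K" if "i < n" for i
    using that Qmat_row_mult_sum[OF that, of d lam "\<lambda>j. cnj (y $ j)"] conj_orth
    by (simp add: Q_def Qmat_def K_def)
  then have "\<mu> * (\<Sum>j<n. y $ j * cnj (y $ j))
      = (\<Sum>i<n. y $ i * (of_real (qdiag d n lam i) * cnj (y $ i) + of_real (1 - lam) * K))"
    using left_eigenvector_quadratic_form[of Q n y \<mu>] y by (simp add: Q_def Qmat_def)
  also have "\<dots> = (\<Sum>i<n. of_real (qdiag d n lam i) * (y $ i * cnj (y $ i)))
      + of_real (1 - lam) * K * (\<Sum>i<n. y $ i)"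
  proof -
    have "y $ i * (of_real (qdiag d n lam i) * cnj (y $ i) + of_real (1 - lam) * K)
        = of_real (qdiag d n lam i) * (y $ i * cnj (y $ i)) + of_real (1 - lam) * K * y $ i" for i
      by (simp add: algebra_simps)
    then show ?thesis by (simp add: sum.distrib sum_distrib_left)
  qed
  finally have "\<mu> * (\<Sum>j<n. y $ j * cnj (y $ j))
      = (\<Sum>i<n. of_real (qdiag d n lam i) * (y $ i * cnj (y $ i)))"
    using \<open>(\<Sum>i<n. y $ i) = 0\<close> by simp
  moreover obtain i0 where "i0 < n" "y $ i0 \<noteq> 0"
    using y(1,2) by (metis carrier_vecD eq_vecI index_zero_vec)
  ultimately show ?thesis
    using abs_qdiag_less[of n d lam] n d \<open>lam > 0\<close> by (intro cmod_less_of_weighted_mean) auto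
qed

lemma Qmat_trig_basis_block:
  fixes d n lam Ti
  defines "B \<equiv> Ti * map_mat complex_of_real (Qmat d n lam) * trig_basis_mat n"
  assumes n: "n \<ge> 3" and "\<And>i. i < n \<Longrightarrow> d i > 0"
    and Ti: "Ti \<in> carrier_mat n n" "Ti * trig_basis_mat n = 1\<^sub>m n"
  shows "\<And>i j. 3 \<le> i \<Longrightarrow> i < n \<Longrightarrow> j < 3 \<Longrightarrow> B $$ (i, j) = 0"
    and "char_poly (mat 3 3 (\<lambda>ij. B $$ ij)) = [:-1, 1:] * [:- complex_of_real lam, 1:] ^ 2"
proof -
  note Q = Qmat_carrier[of d n lam]
  note cols = Qmat_mult_trig_basis_cols[where d = d, OF assms(2,3)]
  obtain g1 g2 where "col B 0 = unit_vec n 0"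
    "col B 1 = of_real lam \<cdot>\<^sub>v unit_vec n 1 + g1 \<cdot>\<^sub>v unit_vec n 0"
    "col B 2 = of_real lam \<cdot>\<^sub>v unit_vec n 2 + g2 \<cdot>\<^sub>v unit_vec n 0"
    using col_conj_mat_eq[OF Q trig_basis_mat_carrier Ti, of 0 0 1 0] cols(1)
      col_conj_mat_eq[OF Q trig_basis_mat_carrier Ti, of 1 0] cols(2)
      col_conj_mat_eq[OF Q trig_basis_mat_carrier Ti, of 2 0] cols(3) n
    unfolding B_def by fastforce
  then have B: "B $$ (i, 0) = (if i = 0 then 1 else 0)"
    "B $$ (i, 1) = (if i = 1 then of_real lam else 0) + (if i = 0 then g1 else 0)"
    "B $$ (i, 2) = (if i = 2 then of_real lam else 0) + (if i = 0 then g2 else 0)" if "i < n" for i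
    using that n Ti(1) by (auto simp: B_def dest!: arg_cong[where f = "\<lambda>v. v $ i"])
  show "B $$ (i, j) = 0" if "3 \<le> i" "i < n" "j < 3" for i j
  proof -
    have "j = 0 \<or> j = 1 \<or> j = 2" using \<open>j < 3\<close> by auto
    then show ?thesis using B[OF \<open>i < n\<close>] \<open>3 \<le> i\<close> by auto
  qed
  have "upper_triangular (mat 3 3 (\<lambda>ij. B $$ ij))"
    using B n by (auto simp: upper_triangular_def less_Suc_eq numeral_3_eq_3)
  moreover have "diag_mat (mat 3 3 (\<lambda>ij. B $$ ij)) = [1, of_real lam, of_real lam]"
  proof -
    have "[0..<3] = [0::nat, 1, 2]" by (simp add: upt_rec)
    then show ?thesis using B[of 0] B[of 1] B[of 2] n by (simp add: diag_mat_def)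
  qed
  ultimately show "char_poly (mat 3 3 (\<lambda>ij. B $$ ij)) = [:-1, 1:] * [:- complex_of_real lam, 1:] ^ 2"
    by (simp add: char_poly_upper_triangular[of _ 3] power2_eq_square)
qed

theorem lemma1:
  fixes n :: nat and d :: "nat \<Rightarrow> real" and lam :: real
  assumes "n \<ge> 3"
    and "\<And>i. i < n \<Longrightarrow> d i > 0"
    and "1/4 < lam" and "lam < 1"
  shows "\<exists>mus :: complex list. length mus = n - 3
           \<and> (\<forall>\<mu>\<in>set mus. cmod \<mu> < lam)
           \<and> char_poly (map_mat complex_of_real (Qmat d n lam))
               = [:-1, 1:] * [:- complex_of_real lam, 1:] ^ 2 * (\<Prod>\<mu>\<leftarrow>mus. [:-\<mu>, 1:])"
proof -
  let ?Q = "map_mat complex_of_real (Qmat d n lam)"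
  let ?T = "trig_basis_mat n"
  have "lam > 0" using assms(3) by simp
  obtain Ti where Ti: "Ti \<in> carrier_mat n n" "Ti * ?T = 1\<^sub>m n" "?T * Ti = 1\<^sub>m n"
    using det_non_zero_imp_unit[OF trig_basis_mat_carrier det_trig_basis_mat_neq_0[OF assms(1)]]
    unfolding Units_def ring_mat_simps by auto
  note block = Qmat_trig_basis_block[where d = d, OF assms(1,2) Ti(1,2)]
  obtain mus where length: "length mus = n - 3"
    and char_poly: "char_poly ?Q = char_poly (mat 3 3 (\<lambda>ij. (Ti * ?Q * ?T) $$ ij))
      * (\<Prod>\<mu>\<leftarrow>mus. [:-\<mu>, 1:])"
    and left_eigen: "\<And>\<mu>. \<mu> \<in> set mus \<Longrightarrow> \<exists>y \<in> carrier_vec n. y \<noteq> 0\<^sub>v n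
      \<and> transpose_mat ?Q *\<^sub>v y = \<mu> \<cdot>\<^sub>v y \<and> (\<forall>j<3. col ?T j \<bullet> y = 0)"
    using char_poly_conj_block_upper_triangular[OF Qmat_carrier trig_basis_mat_carrier Ti assms(1)
        block(1)] by blast
  have "\<forall>\<mu>\<in>set mus. cmod \<mu> < lam"
    using left_eigen Qmat_left_eigenvalue_bound[where d = d, OF assms(1,2) \<open>lam > 0\<close>] by blast
  then show ?thesis
    using length char_poly block(2) by (intro exI[of _ mus]) simp
qed

end
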